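(* Let $n\ge 2$, $a\ge\sqrt{n-1}$, $f(x)=a|x^{(1)}|+\sum_{i=2}^n x^{(i)}$ on $\mathbb{R}^n$, and $0<c_1<c_2<1$. Let $x_0\in\mathbb{R}^n$ with $x_0^{(1)}\ne 0$, and define $x_{k+1}=x_k+t_kd_k$ with $d_k=-\nabla f(x_k)$, where the steps $t_k$ satisfy $A(t_k)$ and $W(t_k)$ for all $k=0,1,2,\dots$. Let $S_N=\sum_{k=0}^{N-1}t_k$. Then for every $N\ge1$, $$c_1(a^2+n-1)S_N\le f(x_0)-f(x_N)\le (n-1)S_N+a|x_0^{(1)}|,$$ so that $S_N$ is bounded above as $N\to\infty$ if and only if $f(x_N)$ is bounded below. Furthermore, $f(x_N)$ is bounded below if and only if $x_N$ converges to a point $\bar x$ with $\bar x^{(1)}=0$.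
   Context: $x^{(i)}$ is the $i$-th coordinate. At iteration $k$ (where $f$ is differentiable at $x_k$), the Armijo condition is $A(t)$: $f(x_k+td_k)\le f(x_k)+c_1t\nabla f(x_k)^Td_k$; the Wolfe condition is $W(t)$: $f$ is differentiable at $x_k+td_k$ and $\nabla f(x_k+td_k)^Td_k\ge c_2\nabla f(x_k)^Td_k$. (Wolfe at each step guarantees $f$ is differentiable at every iterate.) *)

theory Defs
  imports "HOL-Analysis.Analysis"
begin

definition grad :: "('a::real_inner \<Rightarrow> real) \<Rightarrow> 'a \<Rightarrow> 'a" where
  "grad f x = (THE D. GDERIV f x :> D)"

definition armijo :: "('a::real_inner \<Rightarrow> real) \<Rightarrow> real \<Rightarrow> 'a \<Rightarrow> 'a \<Rightarrow> real \<Rightarrow> bool" where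
  "armijo f c1 x d t \<longleftrightarrow> f (x + t *\<^sub>R d) \<le> f x + c1 * t * (grad f x \<bullet> d)"

definition wolfe :: "('a::real_inner \<Rightarrow> real) \<Rightarrow> real \<Rightarrow> 'a \<Rightarrow> 'a \<Rightarrow> real \<Rightarrow> bool" where
  "wolfe f c2 x d t \<longleftrightarrow> f differentiable (at (x + t *\<^sub>R d)) \<and>
      grad f (x + t *\<^sub>R d) \<bullet> d \<ge> c2 * (grad f x \<bullet> d)"

text \<open>The test function f(x) = a |x^(1)| + sum_{i >= 2} x^(i); the distinguished
  coordinate "1" is the index i1 of the finite index type.\<close>
definition fex :: "real \<Rightarrow> 'n::finite \<Rightarrow> real^'n \<Rightarrow> real" where
  "fex a i1 x = a * \<bar>x $ i1\<bar> + (\<Sum>i\<in>UNIV - {i1}. x $ i)"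

end

theory Submission
  imports Defs
begin

text \<open>Off the hyperplane x(1) = 0 the function f is linear with gradient
  g = (a sgn x(1), 1, ..., 1), so every step has slope g \<bullet> d = -(a^2 + n - 1) and
  Armijo gives the lower bound. The Wolfe condition forces every iterate to be a point of
  differentiability, and x(1) must change sign at every step: otherwise the slope would
  stay at -(a^2 + n - 1) instead of rising above c2 times it. The other coordinates each
  decrease by exactly t k per step, which gives the upper bound. Summable steps make the
  iterates converge, and the alternating signs put the limit on the kink.\<close>

lemma grad_eqI:
  assumes "GDERIV f x :> D"
  shows "grad f x = D"
  unfolding grad_def
proof (rule the_equality)
  show "GDERIV f x :> D" by fact
  fix D' assume "GDERIV f x :> D'"
  hence "(\<lambda>h. h \<bullet> D') = (\<lambda>h. h \<bullet> D)"
    using assms unfolding gderiv_def by (rule has_derivative_unique)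
  hence "(D' - D) \<bullet> D' = (D' - D) \<bullet> D" by metis
  hence "(D' - D) \<bullet> (D' - D) = 0" by (simp add: inner_diff_right)
  thus "D' = D" by simp
qed

lemma abs_not_differentiable_at_0:
  fixes a b :: real
  assumes "a > 0"
  shows "\<not> (\<lambda>s. a * \<bar>s\<bar> + b) differentiable (at 0)"
proof
  let ?g = "\<lambda>s. a * \<bar>s\<bar> + b"
  assume "?g differentiable (at 0)"
  then obtain D where D: "(?g has_real_derivative D) (at 0)"
    by (auto simp: real_differentiable_def)
  have "D - a = 0"
  proof (rule DERIV_local_min[OF _ zero_less_one])
    show "((\<lambda>s. ?g s - a * s) has_real_derivative D - a) (at 0)"
      using DERIV_diff[OF D DERIV_cmult_Id[of a]] by simp
    show "\<forall>s. \<bar>0 - s\<bar> < 1 \<longrightarrow> ?g 0 - a * 0 \<le> ?g s - a * s"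
      using assms by (auto simp: abs_if)
  qed
  moreover have "D + a = 0"
  proof (rule DERIV_local_min[OF _ zero_less_one])
    show "((\<lambda>s. ?g s + a * s) has_real_derivative D + a) (at 0)"
      using DERIV_add[OF D DERIV_cmult_Id[of a]] by simp
    show "\<forall>s. \<bar>0 - s\<bar> < 1 \<longrightarrow> ?g 0 + a * 0 \<le> ?g s + a * s"
      using assms by (auto simp: abs_if)
  qed
  ultimately show False using assms by linarith
qed

lemma LIMSEQ_of_summable_increments:
  fixes x u :: "nat \<Rightarrow> 'a::banach"
  assumes "\<And>k. x (Suc k) = x k + u k" and "summable (\<lambda>k. norm (u k))"
  shows "x \<longlonglongrightarrow> x 0 + (\<Sum>k. u k)"
proof -
  have partial_sums: "x = (\<lambda>N. x 0 + (\<Sum>k<N. u k))"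
  proof
    show "x N = x 0 + (\<Sum>k<N. u k)" for N by (induction N) (simp_all add: assms(1))
  qed
  have "(\<lambda>N. x 0 + (\<Sum>k<N. u k)) \<longlonglongrightarrow> x 0 + (\<Sum>k. u k)"
    using summable_norm_cancel[OF assms(2)]
    by (intro tendsto_add tendsto_const summable_LIMSEQ)
  thus ?thesis by (subst (1) partial_sums)
qed

lemma LIMSEQ_sign_alternating_imp_zero:
  fixes u :: "nat \<Rightarrow> real"
  assumes "u \<longlonglongrightarrow> L" and "\<And>k. u (Suc k) * u k < 0"
  shows "L = 0"
proof -
  have "(\<lambda>k. u (Suc k) * u k) \<longlonglongrightarrow> L * L"
    using assms(1) by (intro tendsto_intros LIMSEQ_Suc)
  hence "L * L \<le> 0"
    by (rule LIMSEQ_le_const2) (use assms(2) less_imp_le in blast)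
  thus ?thesis by (metis mult_le_0_iff antisym)
qed

definition sum_except :: "'n::finite \<Rightarrow> real^'n \<Rightarrow> real" where
  "sum_except i1 y = (\<Sum>i\<in>UNIV - {i1}. y $ i)"

definition fex_gradient :: "real \<Rightarrow> 'n::finite \<Rightarrow> real^'n \<Rightarrow> real^'n" where
  "fex_gradient a i1 x = (\<chi> i. if i = i1 then a * sgn (x $ i1) else 1)"

lemma fex_eq: "fex a i1 y = a * \<bar>y $ i1\<bar> + sum_except i1 y"
  by (simp add: fex_def sum_except_def)

lemma inner_fex_gradient:
  "y \<bullet> fex_gradient a i1 x = a * sgn (x $ i1) * y $ i1 + sum_except i1 y"
proof -
  have "y \<bullet> fex_gradient a i1 x = (\<Sum>i\<in>UNIV. y $ i * fex_gradient a i1 x $ i)"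
    by (simp add: inner_vec_def)
  also have "\<dots> = y $ i1 * fex_gradient a i1 x $ i1
      + (\<Sum>i\<in>UNIV - {i1}. y $ i * fex_gradient a i1 x $ i)"
    by (simp add: sum.remove[of UNIV i1])
  also have "(\<Sum>i\<in>UNIV - {i1}. y $ i * fex_gradient a i1 x $ i) = sum_except i1 y"
    unfolding sum_except_def by (rule sum.cong) (auto simp: fex_gradient_def)
  finally show ?thesis by (simp add: fex_gradient_def)
qed

lemma sum_except_const:
  fixes i1 :: "'n::finite"
  assumes "\<And>i. i \<noteq> i1 \<Longrightarrow> y $ i = c"
  shows "sum_except i1 y = (real CARD('n) - 1) * c"
proof -
  have "sum_except i1 y = (\<Sum>i\<in>UNIV - {i1}. c)"
    unfolding sum_except_def by (rule sum.cong) (auto simp: assms)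
  also have "\<dots> = (real CARD('n) - 1) * c"
    by (simp add: card_Diff_singleton of_nat_diff)
  finally show ?thesis .
qed

lemma inner_fex_gradient_fex_gradient:
  fixes y z :: "real^'n::finite"
  shows "fex_gradient a i1 y \<bullet> fex_gradient a i1 z
    = a\<^sup>2 * (sgn (y $ i1) * sgn (z $ i1)) + (real CARD('n) - 1)"
proof -
  have "sum_except i1 (fex_gradient a i1 y) = real CARD('n) - 1"
    using sum_except_const[of i1 "fex_gradient a i1 y" 1] by (simp add: fex_gradient_def)
  thus ?thesis
    unfolding inner_fex_gradient by (simp add: fex_gradient_def power2_eq_square)
qed

lemma norm_fex_gradient_le:
  fixes x :: "real^'n::finite"
  shows "norm (fex_gradient a i1 x) \<le> real CARD('n) * (\<bar>a\<bar> + 1)"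
proof -
  have "norm (fex_gradient a i1 x) \<le> (\<Sum>i\<in>UNIV. \<bar>fex_gradient a i1 x $ i\<bar>)"
    by (rule norm_le_l1_cart)
  also have "\<dots> \<le> (\<Sum>i\<in>(UNIV::'n set). \<bar>a\<bar> + 1)"
    by (intro sum_mono) (auto simp: fex_gradient_def abs_mult abs_sgn_eq)
  finally show ?thesis by simp
qed

lemma has_gderiv_fex:
  fixes x :: "real^'n::finite"
  assumes "x $ i1 \<noteq> 0"
  shows "GDERIV (fex a i1) x :> fex_gradient a i1 x"
proof -
  let ?S = "{y::real^'n. 0 < sgn (x $ i1) * y $ i1}"
  have "open ?S"
    by (rule open_Collect_less) (auto intro!: continuous_intros)
  moreover have "x \<in> ?S" using assms by (auto simp: sgn_real_def)
  moreover have "y \<bullet> fex_gradient a i1 x = fex a i1 y" if "y \<in> ?S" for y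
  proof -
    have "\<bar>y $ i1\<bar> = sgn (x $ i1) * y $ i1"
      using that assms by (cases "x $ i1 > 0") (auto simp: sgn_real_def abs_if)
    thus ?thesis by (simp add: inner_fex_gradient fex_eq)
  qed
  moreover have
    "((\<lambda>y. y \<bullet> fex_gradient a i1 x) has_derivative (\<lambda>h. h \<bullet> fex_gradient a i1 x)) (at x)"
    by (rule bounded_linear.has_derivative[OF bounded_linear_inner_left has_derivative_ident])
  ultimately show ?thesis
    unfolding gderiv_def by (blast intro: has_derivative_transform_within_open)
qed

lemma grad_fex:
  fixes x :: "real^'n::finite"
  assumes "x $ i1 \<noteq> 0"
  shows "grad (fex a i1) x = fex_gradient a i1 x"
  using has_gderiv_fex[OF assms] by (rule grad_eqI)

lemma fex_differentiable_imp_coord_nonzero: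
  fixes x :: "real^'n::finite"
  assumes "fex a i1 differentiable (at x)" and "a > 0"
  shows "x $ i1 \<noteq> 0"
proof
  assume x0: "x $ i1 = 0"
  let ?line = "\<lambda>s::real. x + s *\<^sub>R axis i1 1"
  have "?line differentiable (at 0)"
    by (auto intro!: derivative_intros)
  moreover have "fex a i1 differentiable (at (?line 0))" using assms(1) by simp
  ultimately have "(fex a i1 \<circ> ?line) differentiable (at 0)"
    by (rule differentiable_chain_at)
  moreover have "sum_except i1 (?line s) = sum_except i1 x" for s
    unfolding sum_except_def by (rule sum.cong) (auto simp: axis_def)
  hence "fex a i1 \<circ> ?line = (\<lambda>s. a * \<bar>s\<bar> + sum_except i1 x)"
    using x0 by (auto simp: fex_eq axis_def)
  ultimately show False using abs_not_differentiable_at_0[OF assms(2)] by simp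
qed

text \<open>Of the constraints on the constants only a > 0, c1 > 0 and c2 < 1 enter the argument.\<close>
locale fex_wolfe_descent =
  fixes a c1 c2 :: real and i1 :: "'n::finite"
    and x d :: "nat \<Rightarrow> real^'n" and t :: "nat \<Rightarrow> real"
  assumes a_pos: "a > 0"
    and c1_pos: "c1 > 0"
    and c2_less_1: "c2 < 1"
    and x0_coord_nonzero: "x 0 $ i1 \<noteq> 0"
    and d_eq: "\<And>k. d k = - grad (fex a i1) (x k)"
    and x_Suc: "\<And>k. x (Suc k) = x k + t k *\<^sub>R d k"
    and t_pos: "\<And>k. t k > 0"
    and armijo_step: "\<And>k. armijo (fex a i1) c1 (x k) (d k) (t k)"
    and wolfe_step: "\<And>k. wolfe (fex a i1) c2 (x k) (d k) (t k)"
begin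

abbreviation f :: "real^'n \<Rightarrow> real" where
  "f \<equiv> fex a i1"

lemma slope_pos: "a\<^sup>2 + real CARD('n) - 1 > 0"
proof -
  have "real CARD('n) \<ge> 1" by simp
  moreover have "a\<^sup>2 > 0" using a_pos by simp
  ultimately show ?thesis by linarith
qed

lemma x_coord_nonzero: "x k $ i1 \<noteq> 0"
proof (induction k)
  case 0 show ?case by (rule x0_coord_nonzero)
next
  case (Suc k)
  have "f differentiable (at (x (Suc k)))"
    using wolfe_step[of k] by (simp add: wolfe_def x_Suc)
  thus ?case using a_pos by (rule fex_differentiable_imp_coord_nonzero)
qed

lemma grad_x: "grad f (x k) = fex_gradient a i1 (x k)"
  using grad_fex[OF x_coord_nonzero] .

lemma d_eq_fex_gradient: "d k = - fex_gradient a i1 (x k)"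
  by (simp add: d_eq grad_x)

lemma grad_inner_d: "grad f (x k) \<bullet> d k = - (a\<^sup>2 + real CARD('n) - 1)"
proof -
  have "sgn (x k $ i1) * sgn (x k $ i1) = 1"
    using x_coord_nonzero[of k] by (simp add: sgn_real_def)
  thus ?thesis by (simp add: grad_x d_eq_fex_gradient inner_fex_gradient_fex_gradient)
qed

lemma f_decrease: "c1 * (a\<^sup>2 + real CARD('n) - 1) * t k \<le> f (x k) - f (x (Suc k))"
  using armijo_step[of k] by (simp add: armijo_def grad_inner_d x_Suc algebra_simps)

text \<open>If x(1) kept its sign, the gradient would not change along the step, and the
  Wolfe condition would read -K \<ge> -c2 K with K = a^2 + n - 1 > 0, impossible for c2 < 1.\<close>
lemma coord_sign_alternates: "x (Suc k) $ i1 * x k $ i1 < 0"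
proof (rule ccontr)
  assume "\<not> ?thesis"
  hence "x (Suc k) $ i1 * x k $ i1 > 0"
    using x_coord_nonzero[of k] x_coord_nonzero[of "Suc k"]
    by (metis linorder_neqE_linordered_idom mult_eq_0_iff)
  hence same_sign: "sgn (x (Suc k) $ i1) * sgn (x k $ i1) = 1"
    by (metis sgn_mult sgn_pos)
  have "grad f (x (Suc k)) \<bullet> d k = - (a\<^sup>2 + real CARD('n) - 1)"
    by (simp add: grad_x d_eq_fex_gradient inner_fex_gradient_fex_gradient same_sign)
  moreover have "grad f (x (Suc k)) \<bullet> d k \<ge> c2 * (grad f (x k) \<bullet> d k)"
    using wolfe_step[of k] by (simp add: wolfe_def x_Suc)
  ultimately have "- (a\<^sup>2 + real CARD('n) - 1) \<ge> c2 * (- (a\<^sup>2 + real CARD('n) - 1))"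
    by (simp add: grad_inner_d)
  thus False using slope_pos c2_less_1 by (simp add: mult_less_cancel_right1)
qed

lemma sum_except_x:
  "sum_except i1 (x N) = sum_except i1 (x 0) - (real CARD('n) - 1) * (\<Sum>k<N. t k)"
proof (induction N)
  case (Suc N)
  have "sum_except i1 (x (Suc N)) - sum_except i1 (x N) = sum_except i1 (t N *\<^sub>R d N)"
    by (simp add: x_Suc sum_except_def sum.distrib)
  also have "\<dots> = (real CARD('n) - 1) * - t N"
    by (rule sum_except_const) (simp add: d_eq_fex_gradient fex_gradient_def)
  finally show ?case using Suc by (simp add: algebra_simps)
qed simp

lemma descent_lower_bound:
  "c1 * (a\<^sup>2 + real CARD('n) - 1) * (\<Sum>k<N. t k) \<le> f (x 0) - f (x N)"
proof -
  have "c1 * (a\<^sup>2 + real CARD('n) - 1) * (\<Sum>k<N. t k)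
      = (\<Sum>k<N. c1 * (a\<^sup>2 + real CARD('n) - 1) * t k)"
    by (simp add: sum_distrib_left)
  also have "\<dots> \<le> (\<Sum>k<N. f (x k) - f (x (Suc k)))"
    by (intro sum_mono f_decrease)
  also have "\<dots> = f (x 0) - f (x N)"
    by (rule sum_lessThan_telescope')
  finally show ?thesis .
qed

lemma descent_upper_bound:
  "f (x 0) - f (x N) \<le> (real CARD('n) - 1) * (\<Sum>k<N. t k) + a * \<bar>x 0 $ i1\<bar>"
  using sum_except_x[of N] a_pos by (simp add: fex_eq)

lemma bdd_above_steps_iff_bdd_below_values:
  "bdd_above (range (\<lambda>N. \<Sum>k<N. t k)) \<longleftrightarrow> bdd_below (range (\<lambda>N. f (x N)))"
proof
  assume "bdd_above (range (\<lambda>N. \<Sum>k<N. t k))"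
  then obtain B where B: "\<And>N. (\<Sum>k<N. t k) \<le> B" by (auto simp: bdd_above_def)
  have "f (x 0) - (real CARD('n) - 1) * B - a * \<bar>x 0 $ i1\<bar> \<le> f (x N)" for N
  proof -
    have "(real CARD('n) - 1) * (\<Sum>k<N. t k) \<le> (real CARD('n) - 1) * B"
      using B[of N] by (intro mult_left_mono) auto
    thus ?thesis using descent_upper_bound[of N] by linarith
  qed
  thus "bdd_below (range (\<lambda>N. f (x N)))" by (intro bdd_belowI2)
next
  assume "bdd_below (range (\<lambda>N. f (x N)))"
  then obtain L where L: "\<And>N. L \<le> f (x N)" by (auto simp: bdd_below_def)
  have "(\<Sum>k<N. t k) \<le> (f (x 0) - L) / (c1 * (a\<^sup>2 + real CARD('n) - 1))"
    for N
    using descent_lower_bound[of N] L[of N] c1_pos slope_pos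
    by (simp add: pos_le_divide_eq mult.commute)
  thus "bdd_above (range (\<lambda>N. \<Sum>k<N. t k))" by (intro bdd_aboveI2)
qed

lemma convergent_if_bdd_above_steps:
  assumes "bdd_above (range (\<lambda>N. \<Sum>k<N. t k))"
  shows "x \<longlonglongrightarrow> x 0 + (\<Sum>k. t k *\<^sub>R d k)"
  using x_Suc
proof (rule LIMSEQ_of_summable_increments)
  let ?C = "real CARD('n) * (\<bar>a\<bar> + 1)"
  obtain B where B: "\<And>N. (\<Sum>k<N. t k) \<le> B" using assms by (auto simp: bdd_above_def)
  have "summable t"
  proof (rule bounded_imp_summable)
    show "0 \<le> t k" for k using t_pos[of k] by simp
    show "(\<Sum>k\<le>N. t k) \<le> B" for N using B[of "Suc N"] by (simp add: lessThan_Suc_atMost)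
  qed
  show "summable (\<lambda>k. norm (t k *\<^sub>R d k))"
  proof (rule summable_comparison_test')
    show "summable (\<lambda>k. t k * ?C)" using \<open>summable t\<close> by (rule summable_mult2)
    show "norm (norm (t k *\<^sub>R d k)) \<le> t k * ?C" for k
      using norm_fex_gradient_le[of a i1 "x k"] t_pos[of k]
      by (simp add: d_eq_fex_gradient mult_left_mono less_imp_le)
  qed
qed

lemma bdd_below_values_iff_converges_to_kink:
  "bdd_below (range (\<lambda>N. f (x N))) \<longleftrightarrow> (\<exists>xb. x \<longlonglongrightarrow> xb \<and> xb $ i1 = 0)"
proof
  assume "bdd_below (range (\<lambda>N. f (x N)))"
  then obtain xb where lim: "x \<longlonglongrightarrow> xb"
    using convergent_if_bdd_above_steps
    by (auto simp: bdd_above_steps_iff_bdd_below_values)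
  have "xb $ i1 = 0"
  proof (rule LIMSEQ_sign_alternating_imp_zero)
    show "(\<lambda>k. x k $ i1) \<longlonglongrightarrow> xb $ i1" using lim by (intro tendsto_intros)
  qed (rule coord_sign_alternates)
  with lim show "\<exists>xb. x \<longlonglongrightarrow> xb \<and> xb $ i1 = 0" by blast
next
  assume "\<exists>xb. x \<longlonglongrightarrow> xb \<and> xb $ i1 = 0"
  then obtain xb where "x \<longlonglongrightarrow> xb" by blast
  hence "(\<lambda>N. f (x N)) \<longlonglongrightarrow> f xb" unfolding fex_def by (intro tendsto_intros)
  thus "bdd_below (range (\<lambda>N. f (x N)))"
    by (intro Bseq_bdd_below convergent_imp_Bseq convergentI)
qed

end

theorem theorem1:
  fixes a c1 c2 :: real and i1 :: "'n::finite"
    and x d :: "nat \<Rightarrow> real^'n" and t :: "nat \<Rightarrow> real"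
  assumes n2: "CARD('n) \<ge> 2"
    and ha: "a \<ge> sqrt (real CARD('n) - 1)"
    and hc: "0 < c1" "c1 < c2" "c2 < 1"
    and hx0: "x 0 $ i1 \<noteq> 0"
    and hd: "\<And>k. d k = - grad (fex a i1) (x k)"
    and hx: "\<And>k. x (Suc k) = x k + t k *\<^sub>R d k"
    and ht: "\<And>k. t k > 0"
    and hA: "\<And>k. armijo (fex a i1) c1 (x k) (d k) (t k)"
    and hW: "\<And>k. wolfe (fex a i1) c2 (x k) (d k) (t k)"
  shows "(\<forall>N\<ge>1.
            c1 * (a\<^sup>2 + real CARD('n) - 1) * (\<Sum>k<N. t k)
              \<le> fex a i1 (x 0) - fex a i1 (x N)
          \<and> fex a i1 (x 0) - fex a i1 (x N)
              \<le> (real CARD('n) - 1) * (\<Sum>k<N. t k) + a * \<bar>x 0 $ i1\<bar>)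
       \<and> (bdd_above (range (\<lambda>N. \<Sum>k<N. t k)) \<longleftrightarrow> bdd_below (range (\<lambda>N. fex a i1 (x N))))
       \<and> (bdd_below (range (\<lambda>N. fex a i1 (x N))) \<longleftrightarrow>
            (\<exists>xb. x \<longlonglongrightarrow> xb \<and> xb $ i1 = 0))"
proof -
  have "sqrt (real CARD('n) - 1) \<ge> 1" using n2 by simp
  hence "a > 0" using ha by linarith
  then interpret fex_wolfe_descent a c1 c2 i1 x d t
    using hc hx0 hd hx ht hA hW by unfold_locales
  show ?thesis
    using descent_lower_bound descent_upper_bound bdd_above_steps_iff_bdd_below_values
      bdd_below_values_iff_converges_to_kink
    by auto
qed

end
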